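(* Let $S=(G,P,\Lambda,I)$ be a completely simple semigroup with non-singular sandwich matrix $P$, and suppose the group $G$ is an equational domain in the group language $\mathcal{L}_G$. Then the set $M=\{(x,y)\in S^2\mid x=(1,1_G,1)\text{ or }y=(1,1_G,1)\}$ is algebraic over $S$ in the language $\mathcal{L}_S$.
   Context: Rees representation: a completely simple semigroup $S=(G,P,\Lambda,I)$ is given by a group $G$, index sets $\Lambda,I$ (each containing an element $1$), and a matrix $P=(p_{i\lambda})_{i\in I,\lambda\in\Lambda}$ over $G$ normalised so that $p_{1\lambda}=p_{i1}=1_G$; elements are triples $(\lambda,g,i)$ with product $(\lambda,g,i)(\mu,h,j)=(\lambda,gp_{i\mu}h,j)$ and inversion $(\lambda,g,i)^{-1}=(\lambda,p_{i\lambda}^{-1}g^{-1}p_{i\lambda}^{-1},i)$. $P$ is non-singular if it has no two equal rows and no two equal columns. The language $\mathcal{L}_S$ is $\{\cdot,{}^{-1}\}$ plus a constant for each element of $S$; the group language $\mathcal{L}_G$ is $\{\cdot,{}^{-1},1\}$ plus a constant for each element of $G$. A subset is algebraic if it is the solution set of a system of equations (equalities of terms) in the relevant language; a structure is an equational domain (e.d.) if every finite union of algebraic sets is algebraic. (Equivalently, a group $G$ is an e.d. in $\mathcal{L}_G$ iff it has no zero-divisors, where $x\ne1$ is a zero-divisor if there is $y\ne 1$ with $[x,gyg^{-1}]=1$ for all $g\in G$.) *)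

theory Defs
  imports "HOL-Algebra.Group"
begin

datatype 'c gterm = GVar nat | GConst 'c | GMul "'c gterm" "'c gterm" | GInv "'c gterm" | GOne

datatype 'c sterm = SVar nat | SConst 'c | SMul "'c sterm" "'c sterm" | SInv "'c sterm"

fun gvars :: "'c gterm \<Rightarrow> nat set" where
  "gvars (GVar k) = {k}"
| "gvars (GConst c) = {}"
| "gvars (GMul s t) = gvars s \<union> gvars t"
| "gvars (GInv s) = gvars s"
| "gvars GOne = {}"

fun gconsts :: "'c gterm \<Rightarrow> 'c set" where
  "gconsts (GVar k) = {}"
| "gconsts (GConst c) = {c}"
| "gconsts (GMul s t) = gconsts s \<union> gconsts t"
| "gconsts (GInv s) = gconsts s"
| "gconsts GOne = {}"

fun svars :: "'c sterm \<Rightarrow> nat set" where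
  "svars (SVar k) = {k}"
| "svars (SConst c) = {}"
| "svars (SMul s t) = svars s \<union> svars t"
| "svars (SInv s) = svars s"

fun sconsts :: "'c sterm \<Rightarrow> 'c set" where
  "sconsts (SVar k) = {}"
| "sconsts (SConst c) = {c}"
| "sconsts (SMul s t) = sconsts s \<union> sconsts t"
| "sconsts (SInv s) = sconsts s"

fun geval :: "('g, 'b) monoid_scheme \<Rightarrow> 'g list \<Rightarrow> 'g gterm \<Rightarrow> 'g" where
  "geval G xs (GVar k) = xs ! k"
| "geval G xs (GConst c) = c"
| "geval G xs (GMul s t) = geval G xs s \<otimes>\<^bsub>G\<^esub> geval G xs t"
| "geval G xs (GInv s) = inv\<^bsub>G\<^esub> (geval G xs s)"
| "geval G xs GOne = \<one>\<^bsub>G\<^esub>"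

definition group_algebraic :: "('g, 'b) monoid_scheme \<Rightarrow> nat \<Rightarrow> 'g list set \<Rightarrow> bool" where
  "group_algebraic G n X \<longleftrightarrow>
     (\<exists>E :: ('g gterm \<times> 'g gterm) set.
        (\<forall>(s, t)\<in>E. gvars s \<union> gvars t \<subseteq> {..<n} \<and> gconsts s \<union> gconsts t \<subseteq> carrier G) \<and>
        X = {xs. length xs = n \<and> set xs \<subseteq> carrier G \<and>
                 (\<forall>(s, t)\<in>E. geval G xs s = geval G xs t)})"

text \<open>Equational domain: every finite (non-empty) union of algebraic sets is algebraic;
  equivalently, the union of any two algebraic sets is algebraic.\<close>
definition group_equational_domain :: "('g, 'b) monoid_scheme \<Rightarrow> bool" where
  "group_equational_domain G \<longleftrightarrow>
     (\<forall>n X Y. group_algebraic G n X \<longrightarrow> group_algebraic G n Y \<longrightarrow> group_algebraic G n (X \<union> Y))"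

definition rees_carrier :: "'l set \<Rightarrow> ('g, 'b) monoid_scheme \<Rightarrow> 'i set \<Rightarrow> ('l \<times> 'g \<times> 'i) set" where
  "rees_carrier \<Lambda> G I = \<Lambda> \<times> carrier G \<times> I"

definition rees_mult :: "('g, 'b) monoid_scheme \<Rightarrow> ('i \<Rightarrow> 'l \<Rightarrow> 'g) \<Rightarrow>
    ('l \<times> 'g \<times> 'i) \<Rightarrow> ('l \<times> 'g \<times> 'i) \<Rightarrow> ('l \<times> 'g \<times> 'i)" where
  "rees_mult G P x y = (case x of (l, g, i) \<Rightarrow> case y of (m, h, j) \<Rightarrow>
      (l, g \<otimes>\<^bsub>G\<^esub> P i m \<otimes>\<^bsub>G\<^esub> h, j))"

definition rees_inv :: "('g, 'b) monoid_scheme \<Rightarrow> ('i \<Rightarrow> 'l \<Rightarrow> 'g) \<Rightarrow>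
    ('l \<times> 'g \<times> 'i) \<Rightarrow> ('l \<times> 'g \<times> 'i)" where
  "rees_inv G P x = (case x of (l, g, i) \<Rightarrow>
      (l, inv\<^bsub>G\<^esub> (P i l) \<otimes>\<^bsub>G\<^esub> inv\<^bsub>G\<^esub> g \<otimes>\<^bsub>G\<^esub> inv\<^bsub>G\<^esub> (P i l), i))"

text \<open>Sandwich matrix P = (p_{i lambda}) over G, normalised w.r.t. the distinguished indices
  i1 \<in> I and l1 \<in> Lambda (the elements called 1 in the paper).\<close>
definition rees_matrix :: "'l set \<Rightarrow> ('g, 'b) monoid_scheme \<Rightarrow> 'i set \<Rightarrow> ('i \<Rightarrow> 'l \<Rightarrow> 'g) \<Rightarrow> 'l \<Rightarrow> 'i \<Rightarrow> bool" where
  "rees_matrix \<Lambda> G I P l1 i1 \<longleftrightarrow> l1 \<in> \<Lambda> \<and> i1 \<in> I \<and>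
     (\<forall>i\<in>I. \<forall>l\<in>\<Lambda>. P i l \<in> carrier G) \<and>
     (\<forall>l\<in>\<Lambda>. P i1 l = \<one>\<^bsub>G\<^esub>) \<and> (\<forall>i\<in>I. P i l1 = \<one>\<^bsub>G\<^esub>)"

definition non_singular :: "'l set \<Rightarrow> 'i set \<Rightarrow> ('i \<Rightarrow> 'l \<Rightarrow> 'g) \<Rightarrow> bool" where
  "non_singular \<Lambda> I P \<longleftrightarrow>
     (\<forall>i\<in>I. \<forall>j\<in>I. i \<noteq> j \<longrightarrow> (\<exists>l\<in>\<Lambda>. P i l \<noteq> P j l)) \<and>
     (\<forall>l\<in>\<Lambda>. \<forall>m\<in>\<Lambda>. l \<noteq> m \<longrightarrow> (\<exists>i\<in>I. P i l \<noteq> P i m))"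

fun seval :: "('g, 'b) monoid_scheme \<Rightarrow> ('i \<Rightarrow> 'l \<Rightarrow> 'g) \<Rightarrow> ('l \<times> 'g \<times> 'i) list \<Rightarrow>
    ('l \<times> 'g \<times> 'i) sterm \<Rightarrow> ('l \<times> 'g \<times> 'i)" where
  "seval G P xs (SVar k) = xs ! k"
| "seval G P xs (SConst c) = c"
| "seval G P xs (SMul s t) = rees_mult G P (seval G P xs s) (seval G P xs t)"
| "seval G P xs (SInv s) = rees_inv G P (seval G P xs s)"

definition rees_algebraic :: "'l set \<Rightarrow> ('g, 'b) monoid_scheme \<Rightarrow> 'i set \<Rightarrow> ('i \<Rightarrow> 'l \<Rightarrow> 'g) \<Rightarrow>
    nat \<Rightarrow> ('l \<times> 'g \<times> 'i) list set \<Rightarrow> bool" where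
  "rees_algebraic \<Lambda> G I P n X \<longleftrightarrow>
     (\<exists>E :: (('l \<times> 'g \<times> 'i) sterm \<times> ('l \<times> 'g \<times> 'i) sterm) set.
        (\<forall>(s, t)\<in>E. svars s \<union> svars t \<subseteq> {..<n} \<and>
                     sconsts s \<union> sconsts t \<subseteq> rees_carrier \<Lambda> G I) \<and>
        X = {xs. length xs = n \<and> set xs \<subseteq> rees_carrier \<Lambda> G I \<and>
                 (\<forall>(s, t)\<in>E. seval G P xs s = seval G P xs t)})"

end

theory Submission
  imports Defs
begin

(* Let e = (l1, 1, i1).  The H-class {(l1, g, i1) | g \<in> G} of e is a copy of G
   inside S, so every group term s lifts to a semigroup term whose value is (l1, s(u,v), i1)
   whenever its variables are replaced by semigroup terms with values (l1, u, i1), (l1, v, i1).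
   Each element x = (l, g, i) of S has "coordinates" in G, all definable by one-variable terms
   whose values lie in this H-class:  g itself (via e x e), the column entries p_{j l} and the
   row entries p_{i m}.  Because P is normalised and non-singular, x = e exactly when all
   coordinates of x are 1.
   The file first shows that the preimage of any algebraic set X \<subseteq> G^n under all
   coordinate maps S^n \<rightarrow> G^n is algebraic in S (lift the equations of X along every choice
   of coordinates).  Since G is an equational domain, the union of the two axes
   {u = 1} \<union> {v = 1} is algebraic in G^2; its preimage is exactly
   {(x, y) | x = e \<or> y = e}, which proves the theorem. *)

lemma (in group) geval_closed:
  assumes "gvars s \<subseteq> {..<length us}" and "gconsts s \<subseteq> carrier G" and "set us \<subseteq> carrier G"
  shows "geval G us s \<in> carrier G"
  using assms by (induction s) auto

lemma (in group) group_algebraic_entry_one: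
  assumes "k < n"
  shows "group_algebraic G n {us. length us = n \<and> set us \<subseteq> carrier G \<and> us ! k = \<one>}"
  unfolding group_algebraic_def using assms
  by (intro exI[of _ "{(GVar k, GOne)}"]) auto

lemma (in group) equational_domain_axes_algebraic:
  assumes "group_equational_domain G"
  shows "group_algebraic G 2
           {[u, v] | u v. u \<in> carrier G \<and> v \<in> carrier G \<and> (u = \<one> \<or> v = \<one>)}"
proof -
  have "{[u, v] | u v. u \<in> carrier G \<and> v \<in> carrier G \<and> (u = \<one> \<or> v = \<one>)} =
        {us. length us = 2 \<and> set us \<subseteq> carrier G \<and> us ! 0 = \<one>} \<union>
        {us. length us = 2 \<and> set us \<subseteq> carrier G \<and> us ! 1 = \<one>}"
    by (auto simp: length_Suc_conv numeral_2_eq_2)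
  then show ?thesis
    using assms group_algebraic_entry_one[of 0 2] group_algebraic_entry_one[of 1 2]
    unfolding group_equational_domain_def by simp
qed

lemma pairs_as_lists:
  "{[x, y] | x y. x \<in> A \<and> y \<in> A \<and> Q [x, y]} = {xs. length xs = 2 \<and> set xs \<subseteq> A \<and> Q xs}"
  by (auto simp: length_Suc_conv numeral_2_eq_2)

lemma all_lists_of_length_2:
  "(\<forall>ws. length ws = 2 \<and> set ws \<subseteq> A \<longrightarrow> Q ws) \<longleftrightarrow> (\<forall>a\<in>A. \<forall>b\<in>A. Q [a, b])"
  by (auto simp: length_Suc_conv numeral_2_eq_2)

fun lift_gterm :: "('g, 'b) monoid_scheme \<Rightarrow> 'l \<Rightarrow> 'i \<Rightarrow> ('l \<times> 'g \<times> 'i) sterm list \<Rightarrow>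
    'g gterm \<Rightarrow> ('l \<times> 'g \<times> 'i) sterm" where
  "lift_gterm G l1 i1 ts (GVar k) = ts ! k"
| "lift_gterm G l1 i1 ts (GConst c) = SConst (l1, c, i1)"
| "lift_gterm G l1 i1 ts (GMul s t) = SMul (lift_gterm G l1 i1 ts s) (lift_gterm G l1 i1 ts t)"
| "lift_gterm G l1 i1 ts (GInv s) = SInv (lift_gterm G l1 i1 ts s)"
| "lift_gterm G l1 i1 ts GOne = SConst (l1, \<one>\<^bsub>G\<^esub>, i1)"

lemma svars_lift_gterm:
  "gvars s \<subseteq> {..<length ts} \<Longrightarrow> svars (lift_gterm G l1 i1 ts s) \<subseteq> (\<Union>t\<in>set ts. svars t)"
  by (induction s) (auto intro!: bexI[OF _ nth_mem])

lemma sconsts_lift_gterm: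
  "gvars s \<subseteq> {..<length ts} \<Longrightarrow> sconsts (lift_gterm G l1 i1 ts s) \<subseteq>
     (\<Union>t\<in>set ts. sconsts t) \<union> insert (l1, \<one>\<^bsub>G\<^esub>, i1) ((\<lambda>c. (l1, c, i1)) ` gconsts s)"
  by (induction s) auto

definition coord_index :: "'i set \<Rightarrow> 'l set \<Rightarrow> ('i + 'l) option set" where
  "coord_index I \<Lambda> = insert None (Some ` (Inl ` I \<union> Inr ` \<Lambda>))"

definition coord :: "('i \<Rightarrow> 'l \<Rightarrow> 'g) \<Rightarrow> ('l \<times> 'g \<times> 'i) \<Rightarrow> ('i + 'l) option \<Rightarrow> 'g" where
  "coord P x w = (case x of (l, g, i) \<Rightarrow>
     (case w of None \<Rightarrow> g | Some (Inl j) \<Rightarrow> P j l | Some (Inr m) \<Rightarrow> P i m))"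

text \<open>One-variable terms defining the coordinates of the variable k inside the H-class of e:
  e x e = (l1, g, i1), then (l1,1,j) x e (e x e)^{-1} and (e x e)^{-1} e x (m,1,i1).\<close>
definition sandwich_term :: "('g, 'b) monoid_scheme \<Rightarrow> 'l \<Rightarrow> 'i \<Rightarrow> nat \<Rightarrow> ('l \<times> 'g \<times> 'i) sterm" where
  "sandwich_term G l1 i1 k =
     SMul (SMul (SConst (l1, \<one>\<^bsub>G\<^esub>, i1)) (SVar k)) (SConst (l1, \<one>\<^bsub>G\<^esub>, i1))"

fun coord_term :: "('g, 'b) monoid_scheme \<Rightarrow> 'l \<Rightarrow> 'i \<Rightarrow> nat \<Rightarrow> ('i + 'l) option \<Rightarrow>
    ('l \<times> 'g \<times> 'i) sterm" where
  "coord_term G l1 i1 k None = sandwich_term G l1 i1 k"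
| "coord_term G l1 i1 k (Some (Inl j)) =
     SMul (SMul (SMul (SConst (l1, \<one>\<^bsub>G\<^esub>, j)) (SVar k)) (SConst (l1, \<one>\<^bsub>G\<^esub>, i1)))
          (SInv (sandwich_term G l1 i1 k))"
| "coord_term G l1 i1 k (Some (Inr m)) =
     SMul (SInv (sandwich_term G l1 i1 k))
          (SMul (SMul (SConst (l1, \<one>\<^bsub>G\<^esub>, i1)) (SVar k)) (SConst (m, \<one>\<^bsub>G\<^esub>, i1)))"

lemma coord_index_cases:
  assumes "w \<in> coord_index I \<Lambda>"
  obtains (entry) "w = None"
  | (column) j where "j \<in> I" "w = Some (Inl j)"
  | (row) m where "m \<in> \<Lambda>" "w = Some (Inr m)"
  using assms unfolding coord_index_def by auto

lemma svars_coord_term: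
  "w \<in> coord_index I \<Lambda> \<Longrightarrow> svars (coord_term G l1 i1 k w) \<subseteq> {k}"
  by (erule coord_index_cases) (auto simp: sandwich_term_def)

definition coord_terms :: "('g, 'b) monoid_scheme \<Rightarrow> 'l \<Rightarrow> 'i \<Rightarrow> ('i + 'l) option list \<Rightarrow>
    ('l \<times> 'g \<times> 'i) sterm list" where
  "coord_terms G l1 i1 ws = map (\<lambda>k. coord_term G l1 i1 k (ws ! k)) [0..<length ws]"

locale normalised_rees = group G for G :: "('g, 'b) monoid_scheme" (structure) +
  fixes \<Lambda> :: "'l set" and I :: "'i set" and P :: "'i \<Rightarrow> 'l \<Rightarrow> 'g" and l1 :: 'l and i1 :: 'i
  assumes rees: "rees_matrix \<Lambda> G I P l1 i1"
begin

lemma l1_in: "l1 \<in> \<Lambda>" and i1_in: "i1 \<in> I"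
  and P_closed: "\<And>j m. j \<in> I \<Longrightarrow> m \<in> \<Lambda> \<Longrightarrow> P j m \<in> carrier G"
  and P_row1: "\<And>m. m \<in> \<Lambda> \<Longrightarrow> P i1 m = \<one>"
  and P_col1: "\<And>j. j \<in> I \<Longrightarrow> P j l1 = \<one>"
  using rees unfolding rees_matrix_def by auto

lemma coord_closed:
  assumes "x \<in> rees_carrier \<Lambda> G I" and "w \<in> coord_index I \<Lambda>"
  shows "coord P x w \<in> carrier G"
  using assms P_closed by (auto simp: rees_carrier_def coord_index_def coord_def)

lemma sconsts_coord_term:
  assumes "w \<in> coord_index I \<Lambda>"
  shows "sconsts (coord_term G l1 i1 k w) \<subseteq> rees_carrier \<Lambda> G I"
  using assms
  by (cases rule: coord_index_cases) (auto simp: sandwich_term_def rees_carrier_def l1_in i1_in)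

lemma seval_coord_term:
  assumes x: "xs ! k \<in> rees_carrier \<Lambda> G I" and w: "w \<in> coord_index I \<Lambda>"
  shows "seval G P xs (coord_term G l1 i1 k w) = (l1, coord P (xs ! k) w, i1)"
proof -
  obtain l g i where xk: "xs ! k = (l, g, i)" and l: "l \<in> \<Lambda>" and g: "g \<in> carrier G"
    and i: "i \<in> I"
    using x unfolding rees_carrier_def by auto
  have sandwich: "seval G P xs (sandwich_term G l1 i1 k) = (l1, g, i1)"
    using xk g l i by (simp add: sandwich_term_def rees_mult_def P_row1 P_col1 l1_in i1_in)
  then have sandwich_inv: "seval G P xs (SInv (sandwich_term G l1 i1 k)) = (l1, inv g, i1)"
    using g by (simp add: rees_inv_def P_row1 l1_in)
  from w show ?thesis
  proof (cases rule: coord_index_cases)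
    case entry
    then show ?thesis using sandwich xk by (simp add: coord_def)
  next
    case (column j)
    then show ?thesis
      using sandwich_inv xk g l i P_closed[of j l]
      by (simp add: rees_mult_def coord_def m_assoc P_row1 P_col1 l1_in i1_in)
  next
    case (row m)
    then show ?thesis
      using sandwich_inv xk g l i P_closed[of i m]
      by (simp add: rees_mult_def coord_def m_assoc[symmetric] P_row1 P_col1 l1_in i1_in)
  qed
qed

lemma seval_lift_gterm:
  assumes "gvars s \<subseteq> {..<length ts}" and "gconsts s \<subseteq> carrier G"
    and "length us = length ts" and "set us \<subseteq> carrier G"
    and "\<And>k. k < length ts \<Longrightarrow> seval G P xs (ts ! k) = (l1, us ! k, i1)"
  shows "seval G P xs (lift_gterm G l1 i1 ts s) = (l1, geval G us s, i1)"
  using assms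
proof (induction s)
  case (GMul s t)
  then show ?case
    using geval_closed[of s us] geval_closed[of t us]
    by (simp add: rees_mult_def P_col1 i1_in)
next
  case (GInv s)
  then show ?case
    using geval_closed[of s us] by (simp add: rees_inv_def P_col1 i1_in inv_mult_group)
qed auto

lemma lifted_equation_wf:
  assumes ws: "set ws \<subseteq> coord_index I \<Lambda>" and s: "gvars s \<subseteq> {..<length ws}"
    and c: "gconsts s \<subseteq> carrier G"
  shows "svars (lift_gterm G l1 i1 (coord_terms G l1 i1 ws) s) \<subseteq> {..<length ws}"
    and "sconsts (lift_gterm G l1 i1 (coord_terms G l1 i1 ws) s) \<subseteq> rees_carrier \<Lambda> G I"
proof -
  let ?ts = "coord_terms G l1 i1 ws"
  have bound: "gvars s \<subseteq> {..<length ?ts}"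
    using s by (simp add: coord_terms_def)
  have ts_vars: "svars t \<subseteq> {..<length ws}" and ts_consts: "sconsts t \<subseteq> rees_carrier \<Lambda> G I"
    if "t \<in> set ?ts" for t
  proof -
    have "t \<in> (\<lambda>k. coord_term G l1 i1 k (ws ! k)) ` {..<length ws}"
      using that by (simp add: coord_terms_def atLeast0LessThan)
    then obtain k where k: "k < length ws" and t: "t = coord_term G l1 i1 k (ws ! k)"
      by blast
    have w: "ws ! k \<in> coord_index I \<Lambda>" using ws k nth_mem by blast
    show "svars t \<subseteq> {..<length ws}" using svars_coord_term[OF w, of G l1 i1 k] k t by auto
    show "sconsts t \<subseteq> rees_carrier \<Lambda> G I" using sconsts_coord_term[OF w] t by simp
  qed
  have "(\<Union>t\<in>set ?ts. svars t) \<subseteq> {..<length ws}"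
    using ts_vars by (rule UN_least)
  then show "svars (lift_gterm G l1 i1 ?ts s) \<subseteq> {..<length ws}"
    using svars_lift_gterm[OF bound] by (rule order_trans[rotated])
  have "(\<Union>t\<in>set ?ts. sconsts t) \<subseteq> rees_carrier \<Lambda> G I"
    using ts_consts by (rule UN_least)
  moreover have "insert (l1, \<one>, i1) ((\<lambda>c. (l1, c, i1)) ` gconsts s) \<subseteq> rees_carrier \<Lambda> G I"
    using c by (auto simp: rees_carrier_def l1_in i1_in)
  ultimately show "sconsts (lift_gterm G l1 i1 ?ts s) \<subseteq> rees_carrier \<Lambda> G I"
    using sconsts_lift_gterm[of s ?ts G l1 i1, OF bound] by (meson Un_least order_trans)
qed

lemma coords_closed:
  assumes "set xs \<subseteq> rees_carrier \<Lambda> G I" and "set ws \<subseteq> coord_index I \<Lambda>"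
  shows "set (map2 (coord P) xs ws) \<subseteq> carrier G"
  using assms by (force simp: set_zip intro: coord_closed)

lemma seval_lifted_equation:
  assumes xs: "set xs \<subseteq> rees_carrier \<Lambda> G I" and ws: "set ws \<subseteq> coord_index I \<Lambda>"
    and len: "length xs = length ws"
    and "gvars s \<subseteq> {..<length ws}" and "gconsts s \<subseteq> carrier G"
  shows "seval G P xs (lift_gterm G l1 i1 (coord_terms G l1 i1 ws) s) =
           (l1, geval G (map2 (coord P) xs ws) s, i1)"
proof (rule seval_lift_gterm)
  fix k assume "k < length (coord_terms G l1 i1 ws)"
  then have k: "k < length ws" by (simp add: coord_terms_def)
  then have "xs ! k \<in> rees_carrier \<Lambda> G I" "ws ! k \<in> coord_index I \<Lambda>"
    using nth_mem[of k xs] nth_mem[of k ws] k len xs ws by auto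
  then show "seval G P xs (coord_terms G l1 i1 ws ! k) = (l1, map2 (coord P) xs ws ! k, i1)"
    using k len by (simp add: coord_terms_def seval_coord_term)
next
  show "set (map2 (coord P) xs ws) \<subseteq> carrier G" using coords_closed[OF xs ws] .
qed (use assms in \<open>simp_all add: coord_terms_def\<close>)

lemma lifted_equation_iff:
  assumes "set xs \<subseteq> rees_carrier \<Lambda> G I" and "set ws \<subseteq> coord_index I \<Lambda>"
    and "length xs = length ws"
    and "gvars s \<subseteq> {..<length ws}" and "gconsts s \<subseteq> carrier G"
    and "gvars t \<subseteq> {..<length ws}" and "gconsts t \<subseteq> carrier G"
  shows "seval G P xs (lift_gterm G l1 i1 (coord_terms G l1 i1 ws) s) =
           seval G P xs (lift_gterm G l1 i1 (coord_terms G l1 i1 ws) t) \<longleftrightarrow>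
         geval G (map2 (coord P) xs ws) s = geval G (map2 (coord P) xs ws) t"
  using seval_lifted_equation[of xs ws s] seval_lifted_equation[of xs ws t] assms by simp

lemma rees_algebraic_coordinate_preimage:
  assumes "group_algebraic G n X"
  shows "rees_algebraic \<Lambda> G I P n
           {xs. length xs = n \<and> set xs \<subseteq> rees_carrier \<Lambda> G I \<and>
              (\<forall>ws. length ws = n \<and> set ws \<subseteq> coord_index I \<Lambda> \<longrightarrow> map2 (coord P) xs ws \<in> X)}"
proof -
  obtain E where E_wf: "\<forall>(s, t)\<in>E. gvars s \<union> gvars t \<subseteq> {..<n} \<and>
                                   gconsts s \<union> gconsts t \<subseteq> carrier G"
    and X_def: "X = {us. length us = n \<and> set us \<subseteq> carrier G \<and>
                        (\<forall>(s, t)\<in>E. geval G us s = geval G us t)}"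
    using assms unfolding group_algebraic_def by blast
  define lift where "lift ws = lift_gterm G l1 i1 (coord_terms G l1 i1 ws)" for ws
  define W where "W = {ws. length ws = n \<and> set ws \<subseteq> coord_index I \<Lambda>}"
  define ES where "ES = (\<Union>ws\<in>W. (\<lambda>(s, t). (lift ws s, lift ws t)) ` E)"
  have ES_ball: "(\<forall>(s', t')\<in>ES. Q s' t') \<longleftrightarrow> (\<forall>ws\<in>W. \<forall>(s, t)\<in>E. Q (lift ws s) (lift ws t))"
    for Q :: "_ \<Rightarrow> _ \<Rightarrow> bool"
    by (simp add: ES_def split_beta)
  have E_vars: "gvars s \<subseteq> {..<n}" "gvars t \<subseteq> {..<n}"
    and E_consts: "gconsts s \<subseteq> carrier G" "gconsts t \<subseteq> carrier G" if "(s, t) \<in> E" for s t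
    using E_wf that by auto
  have lifted_wf: "svars (lift ws s) \<subseteq> {..<n} \<and> sconsts (lift ws s) \<subseteq> rees_carrier \<Lambda> G I"
    if ws: "ws \<in> W" and s: "gvars s \<subseteq> {..<n}" "gconsts s \<subseteq> carrier G" for ws s
  proof -
    have "set ws \<subseteq> coord_index I \<Lambda>" and len: "length ws = n" using ws by (simp_all add: W_def)
    from lifted_equation_wf[OF this(1)] s len show ?thesis
      unfolding lift_def by simp
  qed
  have ES_wf: "\<forall>(s', t')\<in>ES. svars s' \<union> svars t' \<subseteq> {..<n} \<and>
                               sconsts s' \<union> sconsts t' \<subseteq> rees_carrier \<Lambda> G I"
    unfolding ES_ball using lifted_wf E_vars E_consts by blast
  have point_iff: "(\<forall>(s, t)\<in>E. seval G P xs (lift ws s) = seval G P xs (lift ws t)) \<longleftrightarrow>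
                     map2 (coord P) xs ws \<in> X"
    if xs: "length xs = n" "set xs \<subseteq> rees_carrier \<Lambda> G I" and ws: "ws \<in> W" for xs ws
  proof -
    have ws': "length ws = n" "set ws \<subseteq> coord_index I \<Lambda>" using ws by (simp_all add: W_def)
    have "seval G P xs (lift ws s) = seval G P xs (lift ws t) \<longleftrightarrow>
            geval G (map2 (coord P) xs ws) s = geval G (map2 (coord P) xs ws) t"
      if "(s, t) \<in> E" for s t
      unfolding lift_def
      by (rule lifted_equation_iff) (use xs ws' E_vars[OF that] E_consts[OF that] in simp_all)
    then show ?thesis
      using coords_closed[OF xs(2) ws'(2)] xs(1) ws'(1) unfolding X_def by auto
  qed
  have "(\<forall>(s, t)\<in>ES. seval G P xs s = seval G P xs t) \<longleftrightarrow> (\<forall>ws\<in>W. map2 (coord P) xs ws \<in> X)"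
    if "length xs = n" "set xs \<subseteq> rees_carrier \<Lambda> G I" for xs
    unfolding ES_ball using point_iff[OF that] by simp
  then have "{xs. length xs = n \<and> set xs \<subseteq> rees_carrier \<Lambda> G I \<and>
                (\<forall>ws. length ws = n \<and> set ws \<subseteq> coord_index I \<Lambda> \<longrightarrow> map2 (coord P) xs ws \<in> X)} =
             {xs. length xs = n \<and> set xs \<subseteq> rees_carrier \<Lambda> G I \<and>
                (\<forall>(s, t)\<in>ES. seval G P xs s = seval G P xs t)}"
    unfolding W_def by auto
  with ES_wf show ?thesis
    unfolding rees_algebraic_def by blast
qed

lemma identity_iff_coords_one:
  assumes N: "non_singular \<Lambda> I P" and x: "x \<in> rees_carrier \<Lambda> G I"
  shows "x = (l1, \<one>, i1) \<longleftrightarrow> (\<forall>w\<in>coord_index I \<Lambda>. coord P x w = \<one>)"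
proof
  assume "x = (l1, \<one>, i1)"
  then show "\<forall>w\<in>coord_index I \<Lambda>. coord P x w = \<one>"
    using P_row1 P_col1 by (auto simp: coord_index_def coord_def)
next
  assume ones: "\<forall>w\<in>coord_index I \<Lambda>. coord P x w = \<one>"
  obtain l g i where x_eq: "x = (l, g, i)" and l: "l \<in> \<Lambda>" and i: "i \<in> I"
    using x unfolding rees_carrier_def by auto
  have "g = \<one>"
    using ones[rule_format, of None] by (simp add: x_eq coord_index_def coord_def)
  moreover have "l = l1"
  proof (rule ccontr)
    assume "l \<noteq> l1"
    then obtain j where "j \<in> I" "P j l \<noteq> P j l1"
      using N l l1_in unfolding non_singular_def by blast
    then show False
      using ones[rule_format, of "Some (Inl j)"] P_col1 by (simp add: x_eq coord_index_def coord_def)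
  qed
  moreover have "i = i1"
  proof (rule ccontr)
    assume "i \<noteq> i1"
    then obtain m where "m \<in> \<Lambda>" "P i m \<noteq> P i1 m"
      using N i i1_in unfolding non_singular_def by blast
    then show False
      using ones[rule_format, of "Some (Inr m)"] P_row1 by (simp add: x_eq coord_index_def coord_def)
  qed
  ultimately show "x = (l1, \<one>, i1)" using x_eq by simp
qed

lemma axes_preimage:
  assumes N: "non_singular \<Lambda> I P"
    and x: "x \<in> rees_carrier \<Lambda> G I" and y: "y \<in> rees_carrier \<Lambda> G I"
  shows "(\<forall>ws. length ws = 2 \<and> set ws \<subseteq> coord_index I \<Lambda> \<longrightarrow>
            map2 (coord P) [x, y] ws \<in> {[u, v] | u v. u \<in> carrier G \<and> v \<in> carrier G \<and> (u = \<one> \<or> v = \<one>)})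
         \<longleftrightarrow> x = (l1, \<one>, i1) \<or> y = (l1, \<one>, i1)"
proof -
  have "(\<forall>ws. length ws = 2 \<and> set ws \<subseteq> coord_index I \<Lambda> \<longrightarrow>
            map2 (coord P) [x, y] ws \<in> {[u, v] | u v. u \<in> carrier G \<and> v \<in> carrier G \<and> (u = \<one> \<or> v = \<one>)})
        \<longleftrightarrow> (\<forall>a\<in>coord_index I \<Lambda>. \<forall>b\<in>coord_index I \<Lambda>. coord P x a = \<one> \<or> coord P y b = \<one>)"
    unfolding all_lists_of_length_2 using coord_closed[OF x] coord_closed[OF y] by auto
  also have "\<dots> \<longleftrightarrow> (\<forall>a\<in>coord_index I \<Lambda>. coord P x a = \<one>) \<or> (\<forall>b\<in>coord_index I \<Lambda>. coord P y b = \<one>)"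
    by blast
  finally show ?thesis
    using identity_iff_coords_one[OF N x] identity_iff_coords_one[OF N y] by simp
qed

end

theorem mainTheorem6:
  fixes G :: "'g monoid" and P :: "'i \<Rightarrow> 'l \<Rightarrow> 'g"
    and \<Lambda> :: "'l set" and I :: "'i set" and l1 :: 'l and i1 :: 'i
  assumes "group G"
    and "rees_matrix \<Lambda> G I P l1 i1"
    and "non_singular \<Lambda> I P"
    and "group_equational_domain G"
  shows "rees_algebraic \<Lambda> G I P 2
           {[x, y] | x y. x \<in> rees_carrier \<Lambda> G I \<and> y \<in> rees_carrier \<Lambda> G I \<and>
              (x = (l1, \<one>\<^bsub>G\<^esub>, i1) \<or> y = (l1, \<one>\<^bsub>G\<^esub>, i1))}"
proof -
  interpret normalised_rees G \<Lambda> I P l1 i1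
    using assms(1,2) by (simp add: normalised_rees_def normalised_rees_axioms_def)
  let ?axes = "{[u, v] | u v. u \<in> carrier G \<and> v \<in> carrier G \<and> (u = \<one>\<^bsub>G\<^esub> \<or> v = \<one>\<^bsub>G\<^esub>)}"
  let ?preimage = "\<lambda>xs. \<forall>ws. length ws = 2 \<and> set ws \<subseteq> coord_index I \<Lambda> \<longrightarrow>
                                map2 (coord P) xs ws \<in> ?axes"
  have "{[x, y] | x y. x \<in> rees_carrier \<Lambda> G I \<and> y \<in> rees_carrier \<Lambda> G I \<and>
            (x = (l1, \<one>\<^bsub>G\<^esub>, i1) \<or> y = (l1, \<one>\<^bsub>G\<^esub>, i1))} =
        {[x, y] | x y. x \<in> rees_carrier \<Lambda> G I \<and> y \<in> rees_carrier \<Lambda> G I \<and> ?preimage [x, y]}"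
    using axes_preimage[OF assms(3)] by blast
  also have "\<dots> = {xs. length xs = 2 \<and> set xs \<subseteq> rees_carrier \<Lambda> G I \<and> ?preimage xs}"
    by (rule pairs_as_lists)
  finally show ?thesis
    using rees_algebraic_coordinate_preimage[OF equational_domain_axes_algebraic[OF assms(4)]]
    by simp
qed

end
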